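(* Let $T$ be a text of length $n$ with suffix tree $\mathcal T$, and let $d=\lceil\log_2 n\rceil$. The total number of unique Weiner links in $\mathcal T$ is $O(n/d)$.
   Context: For a node $v$ of the suffix tree $\mathcal T$ whose root-to-node path spells $p$, and a symbol $c$ such that $cp$ occurs in $T$, the Weiner link $\mathrm{wlink}(v,c)$ goes from $v$ (its source) to the locus $u$ of $cp$ in $\mathcal T$. A Weiner link is heavy if its target node has at least $d$ leaf descendants, and light otherwise. A Weiner link $\mathrm{wlink}(v,c)$ is unique if $v$ is the source of at least $d+1$ Weiner links and $\mathrm{wlink}(v,c)$ is the only heavy Weiner link with source $v$. *)

theory Defs
  imports Complex_Main "HOL-Library.Sublist"
begin

text \<open>Nodes of the
(compacted) suffix tree of T are identified with the strings spelled on their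
root-to-node paths: the root (empty string), the branching nodes
(right-maximal substrings), and the leaves (nonempty suffixes of T that cannot
be extended to the right inside T).  When T ends with a unique terminator the
leaves are exactly the nonempty suffixes of T.\<close>

definition st_leaves :: "'a list \<Rightarrow> 'a list set" where
  "st_leaves T = {p. suffix p T \<and> p \<noteq> [] \<and> \<not> (\<exists>a. sublist (p @ [a]) T)}"

definition st_nodes :: "'a list \<Rightarrow> 'a list set" where
  "st_nodes T = {[]}
     \<union> {p. \<exists>a b. a \<noteq> b \<and> sublist (p @ [a]) T \<and> sublist (p @ [b]) T}
     \<union> st_leaves T"

definition locus :: "'a list \<Rightarrow> 'a list \<Rightarrow> 'a list" where
  "locus T q = (ARG_MIN length u. u \<in> st_nodes T \<and> prefix q u)"

definition leaf_desc :: "'a list \<Rightarrow> 'a list \<Rightarrow> nat" where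
  "leaf_desc T u = card {w \<in> st_leaves T. prefix u w}"

definition wlinks :: "'a list \<Rightarrow> 'a list \<Rightarrow> 'a set" where
  "wlinks T p = {c. sublist (c # p) T}"

definition heavy_wlink :: "'a list \<Rightarrow> nat \<Rightarrow> 'a list \<Rightarrow> 'a \<Rightarrow> bool" where
  "heavy_wlink T d p c \<longleftrightarrow> leaf_desc T (locus T (c # p)) \<ge> d"

definition unique_wlink :: "'a list \<Rightarrow> nat \<Rightarrow> 'a list \<Rightarrow> 'a \<Rightarrow> bool" where
  "unique_wlink T d p c \<longleftrightarrow>
     p \<in> st_nodes T \<and> c \<in> wlinks T p \<and> card (wlinks T p) \<ge> d + 1 \<and>
     heavy_wlink T d p c \<and> (\<forall>c' \<in> wlinks T p. heavy_wlink T d p c' \<longrightarrow> c' = c)"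

definition num_unique_wlinks :: "'a list \<Rightarrow> nat \<Rightarrow> nat" where
  "num_unique_wlinks T d = card {(p, c). unique_wlink T d p c}"

end

theory Submission
  imports Defs
begin

text \<open>Only the branching of the source of a unique Weiner link matters: it has at least
\<open>d + 1\<close> Weiner links, and distinct unique links have distinct sources. So it suffices to
show that at most \<open>n / d\<close> substrings \<open>p\<close> of \<open>T\<close> have \<open>d + 1\<close> or more left extensions \<open>cp\<close>.
The substrings of length \<open>l + 1\<close> are exactly the left extensions of those of length \<open>l\<close>,
and every substring other than a prefix of \<open>T\<close> has at least one left extension. Hence
passing from length \<open>l\<close> to \<open>l + 1\<close> loses at most one substring and gains \<open>d\<close> for every
such highly branching substring of length \<open>l\<close>. As there is no substring of length
\<open>n + 1\<close>, telescoping over \<open>l = 0, \<dots>, n\<close> shows that \<open>d\<close> times their number is at most \<open>n\<close>.\<close>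

definition substrings_of_length :: "'a list \<Rightarrow> nat \<Rightarrow> 'a list set" where
  "substrings_of_length T l = {q. length q = l \<and> sublist q T}"

definition left_branching :: "'a list \<Rightarrow> nat \<Rightarrow> 'a list set" where
  "left_branching T d = {p. sublist p T \<and> d + 1 \<le> card (wlinks T p)}"

lemma finite_sublists: "finite {q. sublist q T}"
  unfolding set_sublists_eq[symmetric] by (rule List.finite_set)

lemma finite_substrings_of_length: "finite (substrings_of_length T l)"
  by (rule finite_subset[OF _ finite_sublists[of T]]) (auto simp: substrings_of_length_def)

lemma finite_left_branching: "finite (left_branching T d)"
  by (rule finite_subset[OF _ finite_sublists[of T]]) (auto simp: left_branching_def)

lemma finite_wlinks: "finite (wlinks T p)"
  by (rule finite_subset[of _ "set T"]) (auto simp: wlinks_def dest: set_mono_sublist)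

lemma sublist_ConsD: "sublist (c # p) T \<Longrightarrow> sublist p T"
  by (metis append_Cons append_Nil sublist_append_leftI sublist_order.order_trans)

lemma substrings_of_length_0: "substrings_of_length T 0 = {[]}"
  by (auto simp: substrings_of_length_def)

lemma substrings_of_length_Suc:
  "substrings_of_length T (Suc l) =
     (\<Union>p \<in> substrings_of_length T l. (\<lambda>c. c # p) ` wlinks T p)"
proof (intro equalityI subsetI)
  fix q assume "q \<in> substrings_of_length T (Suc l)"
  then obtain c p where "q = c # p" "length p = l" "sublist (c # p) T"
    unfolding substrings_of_length_def by (cases q) auto
  then show "q \<in> (\<Union>p \<in> substrings_of_length T l. (\<lambda>c. c # p) ` wlinks T p)"
    by (auto simp: substrings_of_length_def wlinks_def dest: sublist_ConsD)
qed (auto simp: substrings_of_length_def wlinks_def)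

lemma card_substrings_of_length_Suc:
  "card (substrings_of_length T (Suc l)) = (\<Sum>p \<in> substrings_of_length T l. card (wlinks T p))"
proof -
  have "card (substrings_of_length T (Suc l))
      = (\<Sum>p \<in> substrings_of_length T l. card ((\<lambda>c. c # p) ` wlinks T p))"
    unfolding substrings_of_length_Suc
    by (rule card_UN_disjoint) (auto simp: finite_substrings_of_length finite_wlinks)
  also have "\<dots> = (\<Sum>p \<in> substrings_of_length T l. card (wlinks T p))"
    by (rule sum.cong) (auto intro: card_image inj_onI)
  finally show ?thesis .
qed

lemma wlinks_empty_imp_prefix:
  assumes "sublist p T" and "wlinks T p = {}"
  shows "prefix p T"
proof -
  obtain xs ys where T: "T = xs @ p @ ys"
    using assms(1) unfolding sublist_def by blast
  show ?thesis
  proof (cases xs rule: rev_cases)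
    case Nil
    then show ?thesis using T by simp
  next
    case (snoc xs' a)
    then have "sublist (a # p) T"
      using T by (metis append_Cons append_assoc append_Nil sublist_appendI)
    then show ?thesis using assms(2) by (auto simp: wlinks_def)
  qed
qed

lemma card_substrings_without_wlinks_le_1:
  "card {p \<in> substrings_of_length T l. wlinks T p = {}} \<le> 1"
proof -
  have "{p \<in> substrings_of_length T l. wlinks T p = {}} \<subseteq> {take l T}"
    by (auto simp: substrings_of_length_def prefix_def dest!: wlinks_empty_imp_prefix)
  then show ?thesis
    using card_mono[of "{take l T}"] by fastforce
qed

lemma card_substrings_of_length_step:
  "card (substrings_of_length T l) + d * card (left_branching T d \<inter> substrings_of_length T l)
     \<le> card (substrings_of_length T (Suc l)) + 1"
proof -
  let ?A = "substrings_of_length T l"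
  have finite_A: "finite ?A" by (rule finite_substrings_of_length)
  have pointwise: "1 + d * of_bool (p \<in> left_branching T d)
      \<le> card (wlinks T p) + of_bool (wlinks T p = {})" for p
    using finite_wlinks[of T p] by (auto simp: left_branching_def Suc_le_eq card_gt_0_iff)
  have "card ?A + d * card (?A \<inter> left_branching T d)
      = (\<Sum>p \<in> ?A. 1 + d * of_bool (p \<in> left_branching T d))"
    using finite_A by (simp only: sum.distrib flip: sum_distrib_left) simp
  also have "\<dots> \<le> (\<Sum>p \<in> ?A. card (wlinks T p) + of_bool (wlinks T p = {}))"
    by (rule sum_mono) (rule pointwise)
  also have "\<dots> = card (substrings_of_length T (Suc l)) + card {p \<in> ?A. wlinks T p = {}}"
    using finite_A by (simp add: sum.distrib card_substrings_of_length_Suc Collect_conj_eq Int_commute)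
  also have "\<dots> \<le> card (substrings_of_length T (Suc l)) + 1"
    using card_substrings_without_wlinks_le_1 by simp
  finally show ?thesis by (simp add: Int_commute)
qed

lemma telescoping_lower_bound:
  fixes L a :: "nat \<Rightarrow> nat"
  assumes "\<And>l. L l + a l \<le> L (Suc l) + 1"
  shows "L 0 + (\<Sum>l<m. a l) \<le> L m + m"
proof (induction m)
  case (Suc m)
  then show ?case using assms[of m] by simp
qed simp

lemma card_left_branching_bound: "d * card (left_branching T d) \<le> length T"
proof -
  let ?n = "length T"
  let ?B = "\<lambda>l. left_branching T d \<inter> substrings_of_length T l"
  have "left_branching T d = (\<Union>l < Suc ?n. ?B l)"
    by (auto simp: left_branching_def substrings_of_length_def less_Suc_eq_le
        dest: sublist_length_le)
  then have "d * card (left_branching T d) \<le> (\<Sum>l < Suc ?n. d * card (?B l))"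
    by (metis card_UN_le finite_lessThan mult_le_mono2 sum_distrib_left)
  also have "\<dots> \<le> card (substrings_of_length T (Suc ?n)) + ?n"
    using telescoping_lower_bound[of "\<lambda>l. card (substrings_of_length T l)"
        "\<lambda>l. d * card (?B l)" "Suc ?n", OF card_substrings_of_length_step]
    by (simp add: substrings_of_length_0)
  also have "substrings_of_length T (Suc ?n) = {}"
    by (auto simp: substrings_of_length_def dest: sublist_length_le)
  finally show ?thesis by simp
qed

lemma num_unique_wlinks_le_card_left_branching:
  "num_unique_wlinks T d \<le> card (left_branching T d)"
  unfolding num_unique_wlinks_def
proof (rule card_inj_on_le[OF _ _ finite_left_branching])
  have "c' = c" if "unique_wlink T d p c" and "unique_wlink T d p c'" for p c c'
    using that unfolding unique_wlink_def by blast
  then show "inj_on fst {(p, c). unique_wlink T d p c}"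
    by (intro inj_onI) auto
  have "p \<in> left_branching T d" if "unique_wlink T d p c" for p c
    using that unfolding unique_wlink_def left_branching_def wlinks_def
    by (blast dest: sublist_ConsD)
  then show "fst ` {(p, c). unique_wlink T d p c} \<subseteq> left_branching T d"
    by auto
qed

theorem proposition5:
  "\<exists>C N. \<forall>T :: nat list. length T \<ge> N \<longrightarrow>
     real (num_unique_wlinks T (nat \<lceil>log 2 (real (length T))\<rceil>))
       \<le> C * real (length T) / real (nat \<lceil>log 2 (real (length T))\<rceil>)"
proof (intro exI allI impI)
  fix T :: "nat list"
  assume "length T \<ge> 2"
  define d where "d = nat \<lceil>log 2 (real (length T))\<rceil>"
  have "log 2 (real (length T)) \<ge> 1"
    using \<open>length T \<ge> 2\<close> by (subst le_log_iff) auto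
  then have "d \<ge> 1" unfolding d_def by linarith
  have "d * num_unique_wlinks T d \<le> length T"
    using card_left_branching_bound[of d T] num_unique_wlinks_le_card_left_branching[of T d]
    by (meson le_trans mult_le_mono2)
  then have "real d * real (num_unique_wlinks T d) \<le> real (length T)"
    by (metis of_nat_le_iff of_nat_mult)
  then show "real (num_unique_wlinks T d) \<le> 1 * real (length T) / real d"
    using \<open>d \<ge> 1\<close> by (simp add: field_simps)
qed

end
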